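(* Let $E=\ell^\infty(\mathbb N^2)$ (complex), let $\mathcal X$ be its closed unit ball with the weak-* topology, with elements written $x=(x_{j,k})_{j,k=1}^\infty$, and let $\mathcal A$ be the uniform algebra on $\mathcal X$ generated by the coordinate projections $p_{j,k}(x)=x_{j,k}$. Then there is a unital endomorphism of $\mathcal A$ which is a Riesz operator but is not power compact. Specifically, the map $\phi:\mathcal X\to\mathcal X$, $(\phi(x))_{j,k}=x_{j,k+1}/(k+1)$, induces such an endomorphism $Tf=f\circ\phi$.
   Context: $\mathcal X$ with the weak-* topology is compact metrizable; the uniform algebra generated by the $p_{j,k}$ is the closure in $C(\mathcal X)$ (supremum norm) of the polynomials in $1$ and the $p_{j,k}$. A bounded operator $T$ is a Riesz operator if $\lim_{n}\left[\inf\{\|T^n-K\|:K \text{ compact}\}\right]^{1/n}=0$; it is power compact if $T^N$ is compact for some positive integer $N$. *)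

theory Defs
  imports "HOL-Analysis.Analysis"
begin

type_synonym pt = "nat \<times> nat \<Rightarrow> complex"
type_synonym fn = "pt \<Rightarrow> complex"

text \<open>Closed unit ball of ell-infinity(N^2) (indices shifted to start at 0).\<close>
definition Xball :: "pt set" where
  "Xball = {x. \<forall>i. norm (x i) \<le> 1}"

inductive_set polys :: "fn set" where
  poly_const: "(\<lambda>x. c) \<in> polys"
| poly_proj: "(\<lambda>x. x i) \<in> polys"
| poly_add: "p \<in> polys \<Longrightarrow> q \<in> polys \<Longrightarrow> (\<lambda>x. p x + q x) \<in> polys"
| poly_mult: "p \<in> polys \<Longrightarrow> q \<in> polys \<Longrightarrow> (\<lambda>x. p x * q x) \<in> polys"

definition supnorm :: "fn \<Rightarrow> real" where
  "supnorm f = (SUP x\<in>Xball. norm (f x))"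

text \<open>The uniform algebra: sup-norm closure on X of the polynomials; functions
  are normalised to be 0 off X.\<close>
definition Aalg :: "fn set" where
  "Aalg = {f. (\<forall>x. x \<notin> Xball \<longrightarrow> f x = 0) \<and>
              (\<forall>e>0. \<exists>p\<in>polys. \<forall>x\<in>Xball. norm (f x - p x) \<le> e)}"

definition oneA :: fn where
  "oneA = (\<lambda>x. if x \<in> Xball then 1 else 0)"

definition linear_on_A :: "(fn \<Rightarrow> fn) \<Rightarrow> bool" where
  "linear_on_A T \<longleftrightarrow> (\<forall>f\<in>Aalg. T f \<in> Aalg) \<and>
     (\<forall>f\<in>Aalg. \<forall>g\<in>Aalg. T (\<lambda>x. f x + g x) = (\<lambda>x. T f x + T g x)) \<and>
     (\<forall>c. \<forall>f\<in>Aalg. T (\<lambda>x. c * f x) = (\<lambda>x. c * T f x))"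

definition unital_endomorphism :: "(fn \<Rightarrow> fn) \<Rightarrow> bool" where
  "unital_endomorphism T \<longleftrightarrow> linear_on_A T \<and>
     (\<forall>f\<in>Aalg. \<forall>g\<in>Aalg. T (\<lambda>x. f x * g x) = (\<lambda>x. T f x * T g x)) \<and>
     T oneA = oneA"

definition bounded_on_A :: "(fn \<Rightarrow> fn) \<Rightarrow> bool" where
  "bounded_on_A T \<longleftrightarrow> (\<exists>C. \<forall>f\<in>Aalg. supnorm (T f) \<le> C * supnorm f)"

definition opnorm :: "(fn \<Rightarrow> fn) \<Rightarrow> real" where
  "opnorm T = (SUP f\<in>{f\<in>Aalg. supnorm f \<le> 1}. supnorm (T f))"

definition compact_op :: "(fn \<Rightarrow> fn) \<Rightarrow> bool" where
  "compact_op K \<longleftrightarrow> linear_on_A K \<and>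
     (\<forall>f::nat \<Rightarrow> fn. (\<forall>n. f n \<in> Aalg \<and> supnorm (f n) \<le> 1) \<longrightarrow>
        (\<exists>r g. strict_mono r \<and> g \<in> Aalg \<and>
           (\<lambda>n. supnorm (\<lambda>x. K (f (r n)) x - g x)) \<longlonglongrightarrow> 0))"

definition ess_norm :: "(fn \<Rightarrow> fn) \<Rightarrow> real" where
  "ess_norm S = Inf {opnorm (\<lambda>f x. S f x - K f x) | K. compact_op K}"

definition riesz_op :: "(fn \<Rightarrow> fn) \<Rightarrow> bool" where
  "riesz_op T \<longleftrightarrow> (\<lambda>n. root n (ess_norm (T ^^ n))) \<longlonglongrightarrow> 0"

definition power_compact :: "(fn \<Rightarrow> fn) \<Rightarrow> bool" where
  "power_compact T \<longleftrightarrow> (\<exists>N>0. compact_op (T ^^ N))"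

text \<open>phi with 0-based indices: (phi x)(j,k) = x(j,k+1)/(k+2)
  (corresponds to x_{j,k+1}/(k+1) with 1-based indices).\<close>
definition phi :: "pt \<Rightarrow> pt" where
  "phi x = (\<lambda>(j,k). x (j, k+1) / of_nat (k+2))"

definition Tphi :: "fn \<Rightarrow> fn" where
  "Tphi f = (\<lambda>x. if x \<in> Xball then f (phi x) else 0)"

end

(* T f = f o phi, and phi^n maps the unit ball X into the polydisc of radius 1/n!. Restricting
   f in A to the complex line through 0 and x and applying the Schwarz lemma gives
   |f(phi^n x) - f(0)| <= 2 ||f|| / n!, so T^n lies within 2/n! of the rank-one operator
   f |-> f(0), and the n-th roots of the essential norms of T^n tend to 0.
   On the other hand T^N sends the coordinate functions p_(m,0) to p_(m,N) / (N+1)!, and these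
   are pairwise at distance at least 1/(N+1)! (evaluate at the unit vector e_(m,N)); so the image
   of the unit ball under T^N has no convergent subsequence and no power of T is compact. *)

theory Submission
  imports Defs "HOL-Complex_Analysis.Conformal_Mappings"
begin

(* supnorm is a conditionally complete SUP, which carries no information for unbounded f. *)
definition bdd_on_Xball :: "fn \<Rightarrow> bool" where
  "bdd_on_Xball f \<longleftrightarrow> bdd_above ((\<lambda>x. norm (f x)) ` Xball)"

lemma zero_in_Xball [simp]: "(\<lambda>_. 0) \<in> Xball"
  by (simp add: Xball_def)

lemma Xball_nonempty [simp]: "Xball \<noteq> {}"
  using zero_in_Xball by blast

lemma norm_le_one_if_in_Xball: "x \<in> Xball \<Longrightarrow> norm (x i) \<le> 1"
  unfolding Xball_def by blast

lemma bdd_on_XballI: "(\<And>x. x \<in> Xball \<Longrightarrow> norm (f x) \<le> c) \<Longrightarrow> bdd_on_Xball f"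
  unfolding bdd_on_Xball_def by (rule bdd_aboveI2) auto

lemma norm_le_supnorm: "bdd_on_Xball f \<Longrightarrow> x \<in> Xball \<Longrightarrow> norm (f x) \<le> supnorm f"
  unfolding supnorm_def bdd_on_Xball_def by (rule cSUP_upper)

lemma supnorm_le: "(\<And>x. x \<in> Xball \<Longrightarrow> norm (f x) \<le> c) \<Longrightarrow> supnorm f \<le> c"
  unfolding supnorm_def by (rule cSUP_least) auto

lemma supnorm_nonneg: "bdd_on_Xball f \<Longrightarrow> 0 \<le> supnorm f"
  using norm_le_supnorm[OF _ zero_in_Xball] norm_ge_zero order_trans by blast

lemma supnorm_const: "(\<And>x. x \<in> Xball \<Longrightarrow> f x = c) \<Longrightarrow> supnorm f = norm c"
  unfolding supnorm_def by (simp add: cSUP_const)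

lemma norm_diff_le_supnorm:
  "bdd_on_Xball f \<Longrightarrow> bdd_on_Xball g \<Longrightarrow> x \<in> Xball \<Longrightarrow>
    norm (f x - g x) \<le> supnorm f + supnorm g"
  using norm_triangle_ineq4[of "f x" "g x"] norm_le_supnorm[of f x] norm_le_supnorm[of g x]
  by linarith

lemma bdd_on_Xball_diff:
  "bdd_on_Xball f \<Longrightarrow> bdd_on_Xball g \<Longrightarrow> bdd_on_Xball (\<lambda>x. f x - g x)"
  by (rule bdd_on_XballI) (rule norm_diff_le_supnorm)

lemma supnorm_diff_le:
  "bdd_on_Xball f \<Longrightarrow> bdd_on_Xball g \<Longrightarrow> supnorm (\<lambda>x. f x - g x) \<le> supnorm f + supnorm g"
  by (rule supnorm_le) (rule norm_diff_le_supnorm)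

lemma supnorm_le_supnorm_diff_add:
  assumes "bdd_on_Xball f" "bdd_on_Xball g"
  shows "supnorm f \<le> supnorm (\<lambda>x. f x - g x) + supnorm g"
proof (rule supnorm_le)
  fix x assume x: "x \<in> Xball"
  have "norm (f x) \<le> norm (f x - g x) + norm (g x)"
    using norm_triangle_ineq[of "f x - g x" "g x"] by simp
  also have "\<dots> \<le> supnorm (\<lambda>x. f x - g x) + supnorm g"
    using x assms bdd_on_Xball_diff by (intro add_mono norm_le_supnorm)
  finally show "norm (f x) \<le> supnorm (\<lambda>x. f x - g x) + supnorm g" .
qed

section \<open>The uniform algebra and the composition operator\<close>

lemma bdd_on_Xball_polys: "p \<in> polys \<Longrightarrow> bdd_on_Xball p"
proof -
  assume "p \<in> polys"
  then have "\<exists>C. \<forall>x\<in>Xball. norm (p x) \<le> C"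
  proof (induction rule: polys.induct)
    case (poly_const c) then show ?case by auto
  next
    case (poly_proj i) then show ?case using norm_le_one_if_in_Xball by blast
  next
    case (poly_add p q)
    then obtain C D where "\<forall>x\<in>Xball. norm (p x) \<le> C" "\<forall>x\<in>Xball. norm (q x) \<le> D" by blast
    then show ?case by (intro exI[of _ "C + D"]) (smt (verit) norm_triangle_ineq)
  next
    case (poly_mult p q)
    then obtain C D where "\<forall>x\<in>Xball. norm (p x) \<le> C" "\<forall>x\<in>Xball. norm (q x) \<le> D" by blast
    then show ?case by (intro exI[of _ "C * D"]) (simp add: norm_mult mult_mono')
  qed
  then show ?thesis using bdd_on_XballI by metis
qed

lemma Aalg_approx: "f \<in> Aalg \<Longrightarrow> e > 0 \<Longrightarrow> \<exists>p\<in>polys. \<forall>x\<in>Xball. norm (f x - p x) \<le> e"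
  unfolding Aalg_def by blast

lemma Aalg_outside: "f \<in> Aalg \<Longrightarrow> x \<notin> Xball \<Longrightarrow> f x = 0"
  unfolding Aalg_def by blast

lemma bdd_on_Xball_Aalg: "f \<in> Aalg \<Longrightarrow> bdd_on_Xball f"
proof -
  assume "f \<in> Aalg"
  then obtain p where p: "p \<in> polys" "\<forall>x\<in>Xball. norm (f x - p x) \<le> 1"
    using Aalg_approx zero_less_one by blast
  show ?thesis
  proof (rule bdd_on_XballI)
    fix x assume "x \<in> Xball"
    then show "norm (f x) \<le> supnorm p + 1"
      using p norm_le_supnorm[OF bdd_on_Xball_polys] norm_triangle_ineq2[of "f x" "p x"]
      by fastforce
  qed
qed

lemma const_in_Aalg: "(\<lambda>x. if x \<in> Xball then c else 0) \<in> Aalg"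
  unfolding Aalg_def using polys.poly_const[of c] by (auto intro!: bexI[of _ "\<lambda>x. c"])

definition coord_fn :: "nat \<times> nat \<Rightarrow> fn" where
  "coord_fn i = (\<lambda>x. if x \<in> Xball then x i else 0)"

lemma coord_fn_in_Aalg: "coord_fn i \<in> Aalg"
  unfolding Aalg_def coord_fn_def using polys.poly_proj[of i] by (auto intro!: bexI[of _ "\<lambda>x. x i"])

definition Aball :: "fn set" where
  "Aball = {f \<in> Aalg. supnorm f \<le> 1}"

lemma zero_in_Aball: "(\<lambda>x. 0) \<in> Aball"
  unfolding Aball_def using const_in_Aalg[of 0] supnorm_const[of "\<lambda>x. 0" 0] by simp

lemma coord_fn_in_Aball: "coord_fn i \<in> Aball"
  unfolding Aball_def using coord_fn_in_Aalg
  by (auto intro!: supnorm_le simp: coord_fn_def norm_le_one_if_in_Xball)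

lemma phi_in_Xball: "x \<in> Xball \<Longrightarrow> phi x \<in> Xball"
proof -
  assume x: "x \<in> Xball"
  have "norm (x (j, k + 1) / of_nat (k + 2)) \<le> 1" for j k
  proof -
    have "norm (x (j, k + 1) / of_nat (k + 2)) = norm (x (j, k + 1)) / real (k + 2)"
      by (simp only: norm_divide norm_of_nat)
    also have "\<dots> \<le> 1"
      using norm_le_one_if_in_Xball[OF x, of "(j, k + 1)"] by (simp add: divide_le_eq)
    finally show ?thesis .
  qed
  then show ?thesis by (auto simp: Xball_def phi_def)
qed

lemma funpow_phi_in_Xball: "x \<in> Xball \<Longrightarrow> (phi ^^ n) x \<in> Xball"
  by (induction n) (auto simp: phi_in_Xball)

lemma polys_comp_phi: "p \<in> polys \<Longrightarrow> (\<lambda>x. p (phi x)) \<in> polys"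
proof (induction rule: polys.induct)
  case (poly_const c) then show ?case by (rule polys.poly_const)
next
  case (poly_proj i)
  obtain j k where i: "i = (j, k)" by force
  have "(\<lambda>x. inverse (of_nat (k + 2)) * x (j, k + 1)) \<in> polys"
    by (intro polys.intros)
  then show ?case by (simp add: phi_def i field_simps)
next
  case (poly_add p q) then show ?case using polys.poly_add by blast
next
  case (poly_mult p q) then show ?case using polys.poly_mult by blast
qed

lemma Tphi_in_Aalg: "f \<in> Aalg \<Longrightarrow> Tphi f \<in> Aalg"
  unfolding Aalg_def Tphi_def
  by (fastforce intro: polys_comp_phi phi_in_Xball)

lemma unital_endomorphism_Tphi: "unital_endomorphism Tphi"
  unfolding unital_endomorphism_def linear_on_A_def
  using Tphi_in_Aalg by (auto simp: Tphi_def oneA_def phi_in_Xball fun_eq_iff)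

lemma funpow_Tphi:
  "f \<in> Aalg \<Longrightarrow> (Tphi ^^ n) f x = (if x \<in> Xball then f ((phi ^^ n) x) else 0)"
proof (induction n arbitrary: x)
  case 0 then show ?case by (auto simp: Aalg_outside)
next
  case (Suc n)
  have "(Tphi ^^ Suc n) f x = (if x \<in> Xball then (Tphi ^^ n) f (phi x) else 0)"
    by (simp add: Tphi_def)
  then show ?case
    using Suc phi_in_Xball by (simp add: funpow_Suc_right[of n phi] del: funpow.simps)
qed

lemma funpow_Tphi_in_Aalg: "f \<in> Aalg \<Longrightarrow> (Tphi ^^ n) f \<in> Aalg"
  by (induction n) (auto simp: Tphi_in_Aalg)

lemma supnorm_funpow_Tphi_le: "f \<in> Aalg \<Longrightarrow> supnorm ((Tphi ^^ n) f) \<le> supnorm f"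
  by (rule supnorm_le)
    (auto simp: funpow_Tphi funpow_phi_in_Xball bdd_on_Xball_Aalg norm_le_supnorm)

lemma bounded_on_A_Tphi: "bounded_on_A Tphi"
  unfolding bounded_on_A_def
  using supnorm_funpow_Tphi_le[of _ 1] by (intro exI[of _ 1]) simp

lemma funpow_phi: "(phi ^^ n) x (j, k) = x (j, k + n) / pochhammer (of_nat (k + 2)) n"
proof (induction n arbitrary: x)
  case 0 then show ?case by simp
next
  case (Suc n)
  have "(phi ^^ Suc n) x (j, k) = (phi ^^ n) (phi x) (j, k)"
    by (simp add: funpow_Suc_right[of n phi] del: funpow.simps)
  also have "\<dots> = phi x (j, k + n) / pochhammer (of_nat (k + 2)) n"
    by (rule Suc)
  also have "\<dots> = x (j, k + Suc n) / pochhammer (of_nat (k + 2)) (Suc n)"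
    by (simp add: phi_def pochhammer_Suc algebra_simps)
  finally show ?case .
qed

lemma fact_le_pochhammer: "(fact n :: nat) \<le> pochhammer (k + 1) n"
  unfolding pochhammer_fact pochhammer_prod by (rule prod_mono) auto

lemma norm_funpow_phi_le: "x \<in> Xball \<Longrightarrow> norm ((phi ^^ n) x i) \<le> 1 / fact n"
proof -
  assume x: "x \<in> Xball"
  obtain j k where i: "i = (j, k)" by force
  have "(fact n :: nat) \<le> pochhammer (k + 2) n"
    using fact_le_pochhammer[of n "k + 1"] by (simp add: add.assoc)
  then have "fact n \<le> real (pochhammer (k + 2) n)"
    by (metis of_nat_fact of_nat_le_iff)
  moreover have "norm (pochhammer (of_nat (k + 2)) n :: complex) = real (pochhammer (k + 2) n)"
    by (simp only: pochhammer_of_nat norm_of_nat)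
  ultimately show ?thesis
    using norm_le_one_if_in_Xball[OF x, of "(j, k + n)"]
    by (simp only: i funpow_phi norm_divide) (rule frac_le, auto)
qed

section \<open>A Schwarz lemma estimate\<close>

lemma holomorphic_ball_norm_diff_le:
  fixes g :: "complex \<Rightarrow> complex"
  assumes hol: "g holomorphic_on ball 0 1"
    and bound: "\<And>w. norm w < 1 \<Longrightarrow> norm (g w) \<le> M"
    and z: "norm z < 1"
  shows "norm (g z - g 0) \<le> 2 * M * norm z"
proof (rule field_le_epsilon)
  fix e :: real assume e: "e > 0"
  \<comment> \<open>The Schwarz lemma needs a strict bound, hence the slack \<open>e\<close>.\<close>
  define D where "D = 2 * M + e"
  have D: "D > 0" using bound[of 0] e by (simp add: D_def) (smt (verit) norm_ge_zero)
  have diff_lt: "norm (g w - g 0) < D" if "norm w < 1" for w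
    using bound[OF that] bound[of 0] norm_triangle_ineq4[of "g w" "g 0"] e
    by (simp add: D_def)
  define h where "h = (\<lambda>w. (g w - g 0) / of_real D)"
  have "norm (h z) \<le> norm z"
  proof (rule Schwarz_Lemma(1))
    show "h holomorphic_on ball 0 1" unfolding h_def using hol by (intro holomorphic_intros) auto
    show "norm (h w) < 1" if "norm w < 1" for w
      using diff_lt[OF that] D by (simp add: h_def norm_divide)
  qed (use z in \<open>auto simp: h_def\<close>)
  then have "norm (g z - g 0) \<le> D * norm z"
    using D by (simp add: h_def norm_divide divide_le_eq mult.commute)
  also have "\<dots> \<le> 2 * M * norm z + e"
    using z e by (simp add: D_def distrib_right mult_left_le)
  finally show "norm (g z - g 0) \<le> 2 * M * norm z + e" .
qed

lemma holomorphic_polys_line: "p \<in> polys \<Longrightarrow> (\<lambda>z. p (\<lambda>i. z * y i)) holomorphic_on UNIV"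
  by (induction rule: polys.induct) (auto intro!: holomorphic_intros)

lemma polys_norm_diff_zero_le:
  assumes p: "p \<in> polys" and y: "y \<in> Xball" and z: "norm z < 1"
  shows "norm (p (\<lambda>i. z * y i) - p (\<lambda>_. 0)) \<le> 2 * supnorm p * norm z"
proof -
  have "norm (p (\<lambda>i. w * y i)) \<le> supnorm p" if "norm w < 1" for w
  proof -
    have "(\<lambda>i. w * y i) \<in> Xball"
      using norm_le_one_if_in_Xball[OF y] that
      by (auto simp: Xball_def norm_mult intro!: mult_le_one)
    then show ?thesis using norm_le_supnorm[OF bdd_on_Xball_polys[OF p]] by blast
  qed
  then show ?thesis
    using holomorphic_ball_norm_diff_le[of "\<lambda>z. p (\<lambda>i. z * y i)"] z
      holomorphic_polys_line[OF p] holomorphic_on_subset by fastforce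
qed

lemma Aalg_norm_diff_zero_le:
  assumes f: "f \<in> Aalg" and x: "\<And>i. norm (x i) \<le> r" and r: "0 < r" "r < 1"
  shows "norm (f x - f (\<lambda>_. 0)) \<le> 2 * r * supnorm f"
proof (rule field_le_epsilon)
  fix d :: real assume d: "d > 0"
  define e where "e = d / 4"
  have "e > 0" using d by (simp add: e_def)
  then obtain p where p: "p \<in> polys" and approx: "\<forall>x\<in>Xball. norm (f x - p x) \<le> e"
    using Aalg_approx[OF f] by blast
  define y where "y = (\<lambda>i. x i / of_real r)"
  have y: "y \<in> Xball" using x r by (simp add: Xball_def y_def norm_divide)
  have x_eq: "x = (\<lambda>i. of_real r * y i)" using r by (simp add: y_def)
  have "x \<in> Xball" unfolding Xball_def mem_Collect_eq using x r(2) by (meson less_imp_le order_trans)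
  have supnorm_p: "supnorm p \<le> supnorm f + e"
  proof (rule supnorm_le)
    fix z assume "z \<in> Xball"
    then show "norm (p z) \<le> supnorm f + e"
      using approx norm_le_supnorm[OF bdd_on_Xball_Aalg[OF f]] norm_triangle_ineq4[of "f z" "f z - p z"]
      by fastforce
  qed
  have "norm (f x - f (\<lambda>_. 0))
      \<le> norm (f x - p x) + norm (p x - p (\<lambda>_. 0)) + norm (p (\<lambda>_. 0) - f (\<lambda>_. 0))"
    using norm_triangle_ineq[of "f x - p x" "p x - p (\<lambda>_. 0)"]
      norm_triangle_ineq[of "(f x - p x) + (p x - p (\<lambda>_. 0))" "p (\<lambda>_. 0) - f (\<lambda>_. 0)"]
    by simp
  also have "\<dots> \<le> e + 2 * supnorm p * r + e"
    using approx \<open>x \<in> Xball\<close> polys_norm_diff_zero_le[OF p y, of "of_real r"] r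
    by (intro add_mono) (auto simp: x_eq norm_minus_commute)
  also have "\<dots> \<le> 2 * r * supnorm f + 2 * e + 2 * r * e"
    using mult_right_mono[OF supnorm_p, of r] r by (simp add: algebra_simps)
  also have "\<dots> \<le> 2 * r * supnorm f + d"
    using mult_left_le_one_le[of e r] \<open>e > 0\<close> r unfolding e_def by linarith
  finally show "norm (f x - f (\<lambda>_. 0)) \<le> 2 * r * supnorm f + d" .
qed

section \<open>Compact operators and the essential norm\<close>

lemma compact_op_in_Aalg: "compact_op K \<Longrightarrow> f \<in> Aalg \<Longrightarrow> K f \<in> Aalg"
  unfolding compact_op_def linear_on_A_def by blast

lemma compact_opD:
  fixes f :: "nat \<Rightarrow> fn"
  assumes K: "compact_op K" and f: "\<And>n. f n \<in> Aball"
  obtains r g where "strict_mono r" "g \<in> Aalg"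
    "(\<lambda>n. supnorm (\<lambda>x. K (f (r n)) x - g x)) \<longlonglongrightarrow> 0"
proof -
  have "\<forall>n. f n \<in> Aalg \<and> supnorm (f n) \<le> 1" using f by (simp add: Aball_def)
  moreover have "\<forall>f :: nat \<Rightarrow> fn. (\<forall>n. f n \<in> Aalg \<and> supnorm (f n) \<le> 1) \<longrightarrow>
      (\<exists>r g. strict_mono r \<and> g \<in> Aalg \<and>
        (\<lambda>n. supnorm (\<lambda>x. K (f (r n)) x - g x)) \<longlonglongrightarrow> 0)"
    using K by (simp add: compact_op_def)
  ultimately show ?thesis using that by blast
qed

lemma compact_op_bounded:
  assumes K: "compact_op K"
  shows "\<exists>C. \<forall>f\<in>Aball. supnorm (K f) \<le> C"
proof (rule ccontr)
  assume unbounded: "\<not> ?thesis"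
  have "\<forall>n::nat. \<exists>f. f \<in> Aball \<and> real n < supnorm (K f)"
  proof
    fix n :: nat
    have "\<not> (\<forall>f\<in>Aball. supnorm (K f) \<le> real n)" using unbounded by blast
    then show "\<exists>f. f \<in> Aball \<and> real n < supnorm (K f)" by (auto simp: not_le)
  qed
  then obtain F where F: "\<And>n. F n \<in> Aball" and large: "\<And>n. real n < supnorm (K (F n))"
    using choice[of "\<lambda>n f. f \<in> Aball \<and> real n < supnorm (K f)"] by blast
  obtain r g where r: "strict_mono r" and g: "g \<in> Aalg"
    and lim: "(\<lambda>n. supnorm (\<lambda>x. K (F (r n)) x - g x)) \<longlonglongrightarrow> 0"
    by (rule compact_opD[OF K F])
  obtain N where N: "\<And>n. n \<ge> N \<Longrightarrow> supnorm (\<lambda>x. K (F (r n)) x - g x) < 1"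
    using order_tendstoD(2)[OF lim zero_less_one] unfolding eventually_sequentially by blast
  obtain m :: nat where m: "supnorm g + 1 < real m" using reals_Archimedean2 by blast
  define n where "n = max N m"
  have KF: "K (F (r n)) \<in> Aalg" using compact_op_in_Aalg[OF K] F by (simp add: Aball_def)
  have "supnorm (K (F (r n))) \<le> supnorm (\<lambda>x. K (F (r n)) x - g x) + supnorm g"
    using KF g bdd_on_Xball_Aalg by (blast intro: supnorm_le_supnorm_diff_add)
  also have "\<dots> < real m" using N[of n] m by (simp add: n_def)
  also have "\<dots> \<le> real (r n)" using seq_suble[OF r, of n] by (simp add: n_def)
  finally show False using large[of "r n"] by simp
qed

lemma compact_op_not_separated:
  fixes f :: "nat \<Rightarrow> fn"
  assumes K: "compact_op K" and f: "\<And>n. f n \<in> Aball" and \<delta>: "\<delta> > 0"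
  shows "\<exists>m m'. m \<noteq> m' \<and> supnorm (\<lambda>x. K (f m) x - K (f m') x) < \<delta>"
proof -
  obtain r g where r: "strict_mono r" and g: "g \<in> Aalg"
    and lim: "(\<lambda>n. supnorm (\<lambda>x. K (f (r n)) x - g x)) \<longlonglongrightarrow> 0"
    by (rule compact_opD[OF K f])
  define d where "d = (\<lambda>n. supnorm (\<lambda>x. K (f (r n)) x - g x))"
  have "eventually (\<lambda>n. d n < \<delta> / 2) sequentially"
    using order_tendstoD(2)[OF lim[folded d_def], of "\<delta> / 2"] \<delta> by simp
  then obtain N where N: "\<And>n. n \<ge> N \<Longrightarrow> d n < \<delta> / 2"
    unfolding eventually_sequentially by blast
  have bdd: "bdd_on_Xball (\<lambda>x. K (f (r n)) x - g x)" for n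
    using compact_op_in_Aalg[OF K] f g by (intro bdd_on_Xball_diff bdd_on_Xball_Aalg) (auto simp: Aball_def)
  have "supnorm (\<lambda>x. K (f (r N)) x - K (f (r (Suc N))) x)
      = supnorm (\<lambda>x. (K (f (r N)) x - g x) - (K (f (r (Suc N))) x - g x))"
    by simp
  also have "\<dots> \<le> d N + d (Suc N)"
    unfolding d_def by (intro supnorm_diff_le bdd)
  also have "\<dots> < \<delta>" using N[of N] N[of "Suc N"] by simp
  finally have "supnorm (\<lambda>x. K (f (r N)) x - K (f (r (Suc N))) x) < \<delta>" .
  moreover have "r N \<noteq> r (Suc N)"
    using strict_mono_less[OF r, of N "Suc N"] by simp
  ultimately show ?thesis by blast
qed

definition eval_zero_op :: "fn \<Rightarrow> fn" where
  "eval_zero_op f = (\<lambda>x. if x \<in> Xball then f (\<lambda>_. 0) else 0)"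

lemma compact_op_eval_zero_op: "compact_op eval_zero_op"
  unfolding compact_op_def
proof (intro conjI allI impI)
  show "linear_on_A eval_zero_op"
    unfolding linear_on_A_def eval_zero_op_def using const_in_Aalg by (auto simp: fun_eq_iff)
next
  fix f :: "nat \<Rightarrow> fn" assume f: "\<forall>n. f n \<in> Aalg \<and> supnorm (f n) \<le> 1"
  define a where "a n = f n (\<lambda>_. 0)" for n
  have "a n \<in> cball 0 1" for n
  proof -
    have "norm (a n) \<le> supnorm (f n)"
      unfolding a_def using f norm_le_supnorm[OF bdd_on_Xball_Aalg zero_in_Xball] by blast
    then show ?thesis using f[rule_format, of n] by simp
  qed
  moreover have "seq_compact (cball (0::complex) 1)"
    by (rule compact_imp_seq_compact) simp
  ultimately obtain l r where r: "strict_mono r" and lim: "(a \<circ> r) \<longlonglongrightarrow> l"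
    using seq_compactE[of "cball 0 1" a] by blast
  define g where "g = (\<lambda>x. if x \<in> Xball then l else 0)"
  have "supnorm (\<lambda>x. eval_zero_op (f (r n)) x - g x) = norm (a (r n) - l)" for n
    by (rule supnorm_const) (simp add: eval_zero_op_def a_def g_def)
  moreover have "(\<lambda>n. norm (a (r n) - l)) \<longlonglongrightarrow> 0"
    using lim by (simp add: o_def tendsto_norm_zero LIM_zero)
  ultimately have "(\<lambda>n. supnorm (\<lambda>x. eval_zero_op (f (r n)) x - g x)) \<longlonglongrightarrow> 0"
    by simp
  then show "\<exists>r g. strict_mono r \<and> g \<in> Aalg \<and>
      (\<lambda>n. supnorm (\<lambda>x. eval_zero_op (f (r n)) x - g x)) \<longlonglongrightarrow> 0"
    using r const_in_Aalg[of l] unfolding g_def[symmetric] by blast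
qed

lemma opnorm_le: "(\<And>f. f \<in> Aball \<Longrightarrow> supnorm (S f) \<le> c) \<Longrightarrow> opnorm S \<le> c"
  unfolding opnorm_def Aball_def[symmetric] using zero_in_Aball by (intro cSUP_least) auto

(* opnorm is again a SUP, so its nonnegativity rests on compact operators being bounded. *)
lemma opnorm_diff_compact_op_nonneg:
  assumes S: "\<And>f. f \<in> Aball \<Longrightarrow> S f \<in> Aalg \<and> supnorm (S f) \<le> C" and K: "compact_op K"
  shows "0 \<le> opnorm (\<lambda>f x. S f x - K f x)"
proof -
  obtain C' where C': "\<forall>f\<in>Aball. supnorm (K f) \<le> C'"
    using compact_op_bounded[OF K] by blast
  have bdd_S: "bdd_on_Xball (S f)" and bdd_K: "bdd_on_Xball (K f)" if "f \<in> Aball" for f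
    using S[OF that] compact_op_in_Aalg[OF K] that bdd_on_Xball_Aalg by (auto simp: Aball_def)
  have "bdd_above ((\<lambda>f. supnorm (\<lambda>x. S f x - K f x)) ` Aball)"
  proof (rule bdd_aboveI2)
    fix f assume f: "f \<in> Aball"
    have "supnorm (\<lambda>x. S f x - K f x) \<le> supnorm (S f) + supnorm (K f)"
      using bdd_S[OF f] bdd_K[OF f] by (rule supnorm_diff_le)
    also have "\<dots> \<le> C + C'" using S[OF f] C' f by (intro add_mono) auto
    finally show "supnorm (\<lambda>x. S f x - K f x) \<le> C + C'" .
  qed
  then have "supnorm (\<lambda>x. S (\<lambda>x. 0) x - K (\<lambda>x. 0) x) \<le> opnorm (\<lambda>f x. S f x - K f x)"
    unfolding opnorm_def Aball_def[symmetric] by (rule cSUP_upper[OF zero_in_Aball])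
  moreover have "0 \<le> supnorm (\<lambda>x. S (\<lambda>x. 0) x - K (\<lambda>x. 0) x)"
    using zero_in_Aball bdd_S bdd_K by (intro supnorm_nonneg bdd_on_Xball_diff)
  ultimately show ?thesis by linarith
qed

lemma ess_norm_nonneg:
  assumes "\<And>f. f \<in> Aball \<Longrightarrow> S f \<in> Aalg \<and> supnorm (S f) \<le> C"
  shows "0 \<le> ess_norm S"
  unfolding ess_norm_def
  using compact_op_eval_zero_op opnorm_diff_compact_op_nonneg[of S C, OF assms]
  by (intro cInf_greatest) auto

lemma ess_norm_le_opnorm:
  assumes "\<And>f. f \<in> Aball \<Longrightarrow> S f \<in> Aalg \<and> supnorm (S f) \<le> C" and "compact_op K"
  shows "ess_norm S \<le> opnorm (\<lambda>f x. S f x - K f x)"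
  unfolding ess_norm_def
  using assms(2) opnorm_diff_compact_op_nonneg[of S C, OF assms(1)]
  by (intro cInf_lower) (auto simp: bdd_below_def)

lemma funpow_Tphi_Aball: "f \<in> Aball \<Longrightarrow> (Tphi ^^ n) f \<in> Aalg \<and> supnorm ((Tphi ^^ n) f) \<le> 1"
  using funpow_Tphi_in_Aalg[of f n] supnorm_funpow_Tphi_le[of f n] by (auto simp: Aball_def)

(* For n >= 2 the radius 1/n! of the polydisc containing phi^n(X) is less than 1. *)
lemma ess_norm_funpow_Tphi_le:
  assumes n: "2 \<le> n"
  shows "ess_norm (Tphi ^^ n) \<le> 2 / fact n"
proof -
  have fact_n: "(2::real) \<le> fact n"
    using fact_mono[OF n, where 'a = real] by simp
  have "ess_norm (Tphi ^^ n) \<le> opnorm (\<lambda>f x. (Tphi ^^ n) f x - eval_zero_op f x)"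
    by (rule ess_norm_le_opnorm[OF funpow_Tphi_Aball compact_op_eval_zero_op])
  also have "\<dots> \<le> 2 / fact n"
  proof (rule opnorm_le, rule supnorm_le)
    fix f x assume f: "f \<in> Aball" and x: "x \<in> Xball"
    have "norm ((Tphi ^^ n) f x - eval_zero_op f x) = norm (f ((phi ^^ n) x) - f (\<lambda>_. 0))"
      using f x by (simp add: funpow_Tphi eval_zero_op_def Aball_def)
    also have "\<dots> \<le> 2 * (1 / fact n) * supnorm f"
      using f x norm_funpow_phi_le fact_n by (intro Aalg_norm_diff_zero_le) (auto simp: Aball_def)
    also have "\<dots> \<le> 2 / fact n"
      using f by (simp add: Aball_def divide_right_mono)
    finally show "norm ((Tphi ^^ n) f x - eval_zero_op f x) \<le> 2 / fact n" .
  qed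
  finally show ?thesis .
qed

lemma root_tendsto_zero_if_le_inverse_fact:
  fixes a :: "nat \<Rightarrow> real"
  assumes a: "eventually (\<lambda>n. 0 \<le> a n \<and> a n \<le> C / fact n) sequentially"
  shows "(\<lambda>n. root n (a n)) \<longlonglongrightarrow> 0"
proof (rule order_tendstoI)
  show "eventually (\<lambda>n. b < root n (a n)) sequentially" if "b < 0" for b
    using a
  proof eventually_elim
    case (elim n)
    then show ?case using that real_root_ge_zero[of "a n" n] by linarith
  qed
next
  fix \<epsilon> :: real assume \<epsilon>: "0 < \<epsilon>"
  have "(\<lambda>n. C * (inverse (fact n) * (1 / \<epsilon>) ^ n)) \<longlonglongrightarrow> C * 0"
    by (rule tendsto_mult[OF tendsto_const summable_LIMSEQ_zero[OF summable_exp]])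
  then have "eventually (\<lambda>n. C * (inverse (fact n) * (1 / \<epsilon>) ^ n) < 1) sequentially"
    by (rule order_tendstoD) simp
  with a eventually_gt_at_top[of 0]
  show "eventually (\<lambda>n. root n (a n) < \<epsilon>) sequentially"
  proof eventually_elim
    case (elim n)
    have "C / fact n < \<epsilon> ^ n"
      using elim(3) \<epsilon> by (simp add: field_simps power_divide)
    then have "root n (a n) < root n (\<epsilon> ^ n)"
      using elim by (intro real_root_less_mono) auto
    then show ?case
      using elim \<epsilon> by (simp add: real_root_power_cancel)
  qed
qed

lemma riesz_op_Tphi: "riesz_op Tphi"
proof -
  have "eventually (\<lambda>n. 0 \<le> ess_norm (Tphi ^^ n) \<and> ess_norm (Tphi ^^ n) \<le> 2 / fact n) sequentially"
    using eventually_ge_at_top[of 2]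
    by eventually_elim (use ess_norm_nonneg[OF funpow_Tphi_Aball] ess_norm_funpow_Tphi_le in auto)
  then show ?thesis
    unfolding riesz_op_def by (rule root_tendsto_zero_if_le_inverse_fact)
qed

definition basis_pt :: "nat \<times> nat \<Rightarrow> pt" where
  "basis_pt i = (\<lambda>j. if j = i then 1 else 0)"

lemma basis_pt_in_Xball: "basis_pt i \<in> Xball"
  by (simp add: Xball_def basis_pt_def)

lemma funpow_Tphi_coord_fn_basis_pt:
  "(Tphi ^^ N) (coord_fn (m', 0)) (basis_pt (m, N)) = (if m' = m then 1 / fact (Suc N) else 0)"
proof -
  have "(Tphi ^^ N) (coord_fn (m', 0)) (basis_pt (m, N))
      = coord_fn (m', 0) ((phi ^^ N) (basis_pt (m, N)))"
    by (simp add: funpow_Tphi coord_fn_in_Aalg basis_pt_in_Xball)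
  also have "\<dots> = (phi ^^ N) (basis_pt (m, N)) (m', 0)"
    by (simp add: coord_fn_def funpow_phi_in_Xball basis_pt_in_Xball)
  also have "\<dots> = basis_pt (m, N) (m', N) / pochhammer 2 N"
    by (simp add: funpow_phi)
  also have "pochhammer 2 N = (fact (Suc N) :: complex)"
    by (simp add: pochhammer_fact pochhammer_rec del: fact_Suc)
  finally show ?thesis by (simp add: basis_pt_def del: fact_Suc)
qed

lemma funpow_Tphi_coord_fn_separated:
  assumes "m \<noteq> m'"
  shows "1 / fact (Suc N)
    \<le> supnorm (\<lambda>x. (Tphi ^^ N) (coord_fn (m, 0)) x - (Tphi ^^ N) (coord_fn (m', 0)) x)"
proof -
  have "bdd_on_Xball (\<lambda>x. (Tphi ^^ N) (coord_fn (m, 0)) x - (Tphi ^^ N) (coord_fn (m', 0)) x)"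
    by (intro bdd_on_Xball_diff bdd_on_Xball_Aalg funpow_Tphi_in_Aalg coord_fn_in_Aalg)
  from norm_le_supnorm[OF this basis_pt_in_Xball[of "(m, N)"]] show ?thesis
    using assms by (simp add: funpow_Tphi_coord_fn_basis_pt norm_divide del: fact_Suc)
qed

lemma not_compact_op_funpow_Tphi: "\<not> compact_op (Tphi ^^ N)"
proof
  assume K: "compact_op (Tphi ^^ N)"
  obtain m m' where "m \<noteq> m'" and
    "supnorm (\<lambda>x. (Tphi ^^ N) (coord_fn (m, 0)) x - (Tphi ^^ N) (coord_fn (m', 0)) x)
      < 1 / fact (Suc N)"
    using compact_op_not_separated[where f = "\<lambda>m. coord_fn (m, 0)" and \<delta> = "1 / fact (Suc N)",
        OF K coord_fn_in_Aball]
    by auto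
  then show False
    using funpow_Tphi_coord_fn_separated[OF \<open>m \<noteq> m'\<close>, of N] by linarith
qed

theorem theorem4p3:
  shows "(\<forall>x\<in>Xball. phi x \<in> Xball) \<and> unital_endomorphism Tphi \<and> bounded_on_A Tphi
         \<and> riesz_op Tphi \<and> \<not> power_compact Tphi"
  using phi_in_Xball unital_endomorphism_Tphi bounded_on_A_Tphi riesz_op_Tphi
    not_compact_op_funpow_Tphi
  unfolding power_compact_def by blast

end
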